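(* Let $(\mathcal G_t)\subseteq(\mathcal F_t)$ be a filtration, $(\rho^n)_{n\ge1}\subset\mathcal A^\circ(\mathcal G_t)$ and $\rho\in\mathcal A^\circ(\mathcal G_t)$ with $\rho^n\to\rho$ $(\lambda\times\mathbb P)$-a.e. Then for any $t\in[0,T]$ and any random variable $X\ge0$ with $\mathbb E[X]<\infty$, $$\limsup_{n\to\infty}\mathbb E[X\Delta\rho^n_t]\le\mathbb E[X\Delta\rho_t],$$ where $\Delta\rho_t=\rho_t-\rho_{t-}$.
   Context: $(\Omega,\mathcal F,\mathbb P)$ complete probability space with filtration $(\mathcal F_t)_{t\in[0,T]}$, $T\in(0,\infty]$; $\lambda$ is Lebesgue measure on $[0,T]$. $\mathcal A^\circ(\mathcal G_t)$ is the set of $(\mathcal G_t)$-adapted processes $\rho$ with, for all $\omega$, $t\mapsto\rho_t(\omega)$ càdlàg non-decreasing, $\rho_{0-}(\omega)=0$, $\rho_T(\omega)=1$. *)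

theory Defs
  imports "HOL-Probability.Probability"
begin

text \<open>Time is modelled in ereal so that the horizon T may be infinite;
  the time set is the ereal interval {0..T}.  Left limit with the
  convention rho_{0-} = 0.\<close>

definition left_lim :: "(ereal \<Rightarrow> real) \<Rightarrow> ereal \<Rightarrow> real" where
  "left_lim f t = (if t \<le> 0 then 0 else Lim (at_left t) f)"

definition jump :: "(ereal \<Rightarrow> real) \<Rightarrow> ereal \<Rightarrow> real" where
  "jump f t = f t - left_lim f t"

text \<open>The class A-circle(G_t): adapted processes with, for every omega, cadlag
  non-decreasing paths on [0,T], rho_{0-} = 0 (so rho_0 >= 0) and rho_T = 1.\<close>

definition A0 :: "'a measure \<Rightarrow> ereal \<Rightarrow> (ereal \<Rightarrow> 'a measure) \<Rightarrow> (ereal \<Rightarrow> 'a \<Rightarrow> real) \<Rightarrow> bool" where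
  "A0 M T G \<rho> \<longleftrightarrow>
     (\<forall>t\<in>{0..T}. \<rho> t \<in> borel_measurable (G t)) \<and>
     (\<forall>\<omega>\<in>space M.
        mono_on {0..T} (\<lambda>t. \<rho> t \<omega>) \<and>
        0 \<le> \<rho> 0 \<omega> \<and>
        \<rho> T \<omega> = 1 \<and>
        (\<forall>t\<in>{0..<T}. ((\<lambda>s. \<rho> s \<omega>) \<longlongrightarrow> \<rho> t \<omega>) (at_right t)))"

end

theory Submission
  imports Defs
begin

(* Write e_n(s) = E[X rho^n_s] and e(s) = E[X rho_s].  These are non-decreasing, e is
   right-continuous, and by dominated convergence E[X Delta rho^n_t] and E[X Delta rho_t] are
   the jumps of e_n and e at t.  By Fubini, rho^n_s -> rho_s almost surely for almost every s,
   so e_n -> e on a dense set of times containing T.  For p < t <= q in that set the jump of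
   e_n at t is at most e_n(q) - e_n(p), which tends to e(q) - e(p); letting p increase and
   q decrease to t turns this bound into the jump of e at t. *)

lemma at_left_neq_bot:
  fixes t :: "'a::{dense_linorder, linorder_topology}"
  assumes "a < t"
  shows "at_left t \<noteq> bot"
proof
  assume "at_left t = bot"
  then have "eventually (\<lambda>_. False) (at_left t)" by simp
  then obtain b where "b < t" "\<And>y. b < y \<Longrightarrow> y < t \<Longrightarrow> False"
    unfolding eventually_at_left[OF assms] by blast
  then show False using dense[of b t] by blast
qed

lemma left_lim_eqI:
  assumes "0 < t" "(f \<longlongrightarrow> L) (at_left t)"
  shows "left_lim f t = L"
  using assms tendsto_Lim[OF _ assms(2)] at_left_neq_bot[OF assms(1)]
  by (simp add: left_lim_def)

lemma jump_zero [simp]: "jump f 0 = f 0"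
  by (simp add: jump_def left_lim_def)

lemma dense_seq_at_left:
  fixes t :: "'a::{linorder_topology, first_countable_topology}"
  assumes "a < t" and dense: "\<And>c. a \<le> c \<Longrightarrow> c < t \<Longrightarrow> \<exists>s\<in>S. c < s \<and> s < t"
  obtains p where "\<And>k. p k \<in> S" "\<And>k. a < p k" "\<And>k. p k < t"
    "filterlim p (at_left t) sequentially"
proof -
  have "t islimpt (S \<inter> {a<..<t})"
    unfolding islimpt_def
  proof (intro allI impI)
    fix U assume "t \<in> U" "open U"
    then obtain b where "b < t" "{b<..t} \<subseteq> U"
      using open_left[of U t a] \<open>a < t\<close> by blast
    moreover obtain s where "s \<in> S" "max a b < s" "s < t"
      using dense[of "max a b"] \<open>a < t\<close> \<open>b < t\<close> by auto
    ultimately show "\<exists>y\<in>S \<inter> {a<..<t}. y \<in> U \<and> y \<noteq> t"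
      by (intro bexI[of _ s]) auto
  qed
  then obtain p where "\<forall>k. p k \<in> S \<inter> {a<..<t} - {t}" "p \<longlonglongrightarrow> t"
    unfolding islimpt_sequential by blast
  then show thesis
    by (intro that) (auto simp: filterlim_at intro!: always_eventually)
qed

lemma dense_seq_at_right:
  fixes t :: "'a::{linorder_topology, first_countable_topology}"
  assumes "t < b" and dense: "\<And>d. t < d \<Longrightarrow> d \<le> b \<Longrightarrow> \<exists>s\<in>S. t < s \<and> s < d"
  obtains q where "\<And>k. q k \<in> S" "\<And>k. t < q k" "\<And>k. q k < b"
    "filterlim q (at_right t) sequentially"
proof -
  have "t islimpt (S \<inter> {t<..<b})"
    unfolding islimpt_def
  proof (intro allI impI)
    fix U assume "t \<in> U" "open U"
    then obtain c where "t < c" "{t..<c} \<subseteq> U"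
      using open_right[of U t b] \<open>t < b\<close> by blast
    moreover obtain s where "s \<in> S" "t < s" "s < min b c"
      using dense[of "min b c"] \<open>t < b\<close> \<open>t < c\<close> by auto
    ultimately show "\<exists>y\<in>S \<inter> {t<..<b}. y \<in> U \<and> y \<noteq> t"
      by (intro bexI[of _ s]) auto
  qed
  then obtain q where "\<forall>k. q k \<in> S \<inter> {t<..<b} - {t}" "q \<longlonglongrightarrow> t"
    unfolding islimpt_sequential by blast
  then show thesis
    by (intro that) (auto simp: filterlim_at intro!: always_eventually)
qed

lemma mono_on_left_lim:
  fixes f :: "ereal \<Rightarrow> real"
  assumes mono: "mono_on {0..T} f" and "0 < t" "t \<le> T"
  shows "(f \<longlongrightarrow> left_lim f t) (at_left t)"
    and "\<And>p. 0 \<le> p \<Longrightarrow> p < t \<Longrightarrow> f p \<le> left_lim f t"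
    and "left_lim f t \<le> f t"
proof -
  define L where "L = (SUP s\<in>{0..<t}. f s)"
  have bdd: "bdd_above (f ` {0..<t})"
    using \<open>t \<le> T\<close> by (intro bdd_aboveI[where M="f t"]) (auto intro!: mono_onD[OF mono])
  have "(f \<longlongrightarrow> L) (at_left t)"
  proof (rule increasing_tendsto)
    show "\<forall>\<^sub>F s in at_left t. f s \<le> L"
      unfolding eventually_at_left[OF \<open>0 < t\<close>] L_def
      using \<open>0 < t\<close> by (intro exI[of _ 0]) (auto intro: cSUP_upper[OF _ bdd])
    fix x assume "x < L"
    then obtain p where p: "0 \<le> p" "p < t" "x < f p"
      using less_cSUP_iff[OF _ bdd] \<open>0 < t\<close> unfolding L_def by fastforce
    have "x < f s" if "p < s" "s < t" for s
    proof -
      have "f p \<le> f s"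
        using p that \<open>t \<le> T\<close> by (intro mono_onD[OF mono]) auto
      then show ?thesis using p by simp
    qed
    then show "\<forall>\<^sub>F s in at_left t. x < f s"
      unfolding eventually_at_left[OF \<open>0 < t\<close>] using p by blast
  qed
  then show lim: "(f \<longlongrightarrow> left_lim f t) (at_left t)"
    using left_lim_eqI[OF \<open>0 < t\<close>] by simp
  have nbot: "at_left t \<noteq> bot"
    using at_left_neq_bot[OF \<open>0 < t\<close>] .
  show "f p \<le> left_lim f t" if "0 \<le> p" "p < t" for p
  proof (rule tendsto_lowerbound[OF lim _ nbot])
    have "f p \<le> f s" if "p < s" "s < t" for s
      using \<open>0 \<le> p\<close> \<open>p < t\<close> that \<open>t \<le> T\<close> by (intro mono_onD[OF mono]) auto
    then show "\<forall>\<^sub>F s in at_left t. f p \<le> f s"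
      unfolding eventually_at_left[OF \<open>p < t\<close>] using \<open>p < t\<close> by blast
  qed
  show "left_lim f t \<le> f t"
  proof (rule tendsto_upperbound[OF lim _ nbot])
    have "f s \<le> f t" if "0 < s" "s < t" for s
      using that \<open>t \<le> T\<close> by (intro mono_onD[OF mono]) auto
    then show "\<forall>\<^sub>F s in at_left t. f s \<le> f t"
      unfolding eventually_at_left[OF \<open>0 < t\<close>] using \<open>0 < t\<close> by blast
  qed
qed

lemma limsup_le_of_tendsto_bounds:
  fixes a :: "nat \<Rightarrow> real" and b :: "nat \<Rightarrow> nat \<Rightarrow> real"
  assumes "\<And>k n. a n \<le> b k n" "\<And>k. b k \<longlonglongrightarrow> B k" "B \<longlonglongrightarrow> A"
  shows "limsup (\<lambda>n. ereal (a n)) \<le> ereal A"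
proof (rule LIMSEQ_le_const[OF tendsto_ereal[OF \<open>B \<longlonglongrightarrow> A\<close>]])
  have "limsup (\<lambda>n. ereal (a n)) \<le> ereal (B k)" for k
  proof -
    have "limsup (\<lambda>n. ereal (a n)) \<le> limsup (\<lambda>n. ereal (b k n))"
      using assms(1) by (intro Limsup_mono) auto
    also have "\<dots> = ereal (B k)"
      using assms(2) by (intro lim_imp_Limsup) (auto intro: tendsto_ereal)
    finally show ?thesis .
  qed
  then show "\<exists>N. \<forall>k\<ge>N. limsup (\<lambda>n. ereal (a n)) \<le> ereal (B k)"
    by blast
qed

lemma right_approx_in_dense:
  fixes g :: "ereal \<Rightarrow> real"
  assumes right_cont: "t < T \<Longrightarrow> (g \<longlongrightarrow> g t) (at_right t)"
    and "T \<in> S" and dense: "\<And>c d. 0 \<le> c \<Longrightarrow> c < d \<Longrightarrow> d \<le> T \<Longrightarrow> \<exists>s\<in>S. c < s \<and> s < d"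
    and t: "t \<in> {0..T}"
  obtains q where "\<And>k. q k \<in> S" "\<And>k. t \<le> q k" "(\<lambda>k. g (q k)) \<longlonglongrightarrow> g t"
proof (cases "t = T")
  case True
  then show thesis
    using that[of "\<lambda>_. T"] \<open>T \<in> S\<close> by simp
next
  case False
  then have "t < T"
    using t by auto
  obtain q where q: "\<And>k. q k \<in> S" "\<And>k. t < q k" "filterlim q (at_right t) sequentially"
  proof (rule dense_seq_at_right[OF \<open>t < T\<close>, of S])
    show "\<exists>s\<in>S. t < s \<and> s < d" if "t < d" "d \<le> T" for d
      using dense[of t d] that t by auto
  qed blast
  show thesis
    using that q(1) order.strict_implies_order[OF q(2)]
      filterlim_compose[OF right_cont[OF \<open>t < T\<close>] q(3)] by blast
qed

lemma left_lim_approx_in_dense: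
  fixes f :: "nat \<Rightarrow> ereal \<Rightarrow> real" and g :: "ereal \<Rightarrow> real"
  assumes mono: "\<And>n. mono_on {0..T} (f n)" "mono_on {0..T} g"
    and conv: "\<And>s. s \<in> S \<Longrightarrow> (\<lambda>n. f n s) \<longlonglongrightarrow> g s"
    and dense: "\<And>c d. 0 \<le> c \<Longrightarrow> c < d \<Longrightarrow> d \<le> T \<Longrightarrow> \<exists>s\<in>S. c < s \<and> s < d"
    and t: "t \<in> {0..T}"
  obtains L :: "nat \<Rightarrow> nat \<Rightarrow> real" and Lg :: "nat \<Rightarrow> real"
  where "\<And>k n. L k n \<le> left_lim (f n) t" "\<And>k. L k \<longlonglongrightarrow> Lg k" "Lg \<longlonglongrightarrow> left_lim g t"
proof (cases "t = 0")
  case True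
  then show thesis
    using that[of "\<lambda>_ _. 0" "\<lambda>_. 0"] by (simp add: left_lim_def)
next
  case False
  then have t: "0 < t" "t \<le> T"
    using t by auto
  obtain p where p: "\<And>k. p k \<in> S" "\<And>k. 0 < p k" "\<And>k. p k < t"
    "filterlim p (at_left t) sequentially"
  proof (rule dense_seq_at_left[OF \<open>0 < t\<close>, of S])
    show "\<exists>s\<in>S. c < s \<and> s < t" if "0 \<le> c" "c < t" for c
      using dense[of c t] that t by auto
  qed blast
  have "f n (p k) \<le> left_lim (f n) t" for n k
    using p(2,3)[of k] by (intro mono_on_left_lim(2)[OF mono(1) t]) auto
  moreover have "(\<lambda>n. f n (p k)) \<longlonglongrightarrow> g (p k)" for k
    using conv p(1) .
  moreover have "(\<lambda>k. g (p k)) \<longlonglongrightarrow> left_lim g t"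
    using filterlim_compose[OF mono_on_left_lim(1)[OF mono(2) t] p(4)] .
  ultimately show thesis
    by (rule that)
qed

lemma limsup_jump_le:
  fixes f :: "nat \<Rightarrow> ereal \<Rightarrow> real" and g :: "ereal \<Rightarrow> real"
  assumes mono: "\<And>n. mono_on {0..T} (f n)" "mono_on {0..T} g"
    and right_cont: "t < T \<Longrightarrow> (g \<longlongrightarrow> g t) (at_right t)"
    and conv: "\<And>s. s \<in> S \<Longrightarrow> (\<lambda>n. f n s) \<longlonglongrightarrow> g s"
    and S: "S \<subseteq> {0..T}" "T \<in> S"
    and dense: "\<And>c d. 0 \<le> c \<Longrightarrow> c < d \<Longrightarrow> d \<le> T \<Longrightarrow> \<exists>s\<in>S. c < s \<and> s < d"
    and t: "t \<in> {0..T}"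
  shows "limsup (\<lambda>n. ereal (jump (f n) t)) \<le> ereal (jump g t)"
proof -
  obtain q where q: "\<And>k. q k \<in> S" "\<And>k. t \<le> q k" "(\<lambda>k. g (q k)) \<longlonglongrightarrow> g t"
    using right_approx_in_dense[OF right_cont S(2) dense t] by blast
  obtain L Lg where L: "\<And>k n. L k n \<le> left_lim (f n) t" "\<And>k. L k \<longlonglongrightarrow> Lg k"
    "Lg \<longlonglongrightarrow> left_lim g t"
    using left_lim_approx_in_dense[OF mono conv dense t] by blast
  show ?thesis
  proof (rule limsup_le_of_tendsto_bounds)
    have "f n t \<le> f n (q k)" for n k
      using t q(1,2)[of k] S(1) by (intro mono_onD[OF mono(1)]) auto
    then show "jump (f n) t \<le> f n (q k) - L k n" for k n
      unfolding jump_def using L(1)[of k n] by (simp add: diff_mono)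
    show "(\<lambda>n. f n (q k) - L k n) \<longlonglongrightarrow> g (q k) - Lg k" for k
      using conv[OF q(1)] L(2) by (rule tendsto_diff)
    show "(\<lambda>k. g (q k) - Lg k) \<longlonglongrightarrow> jump g t"
      unfolding jump_def using q(3) L(3) by (rule tendsto_diff)
  qed
qed

lemma AE_sections_dense:
  fixes T c d :: ereal and P :: "ereal \<Rightarrow> 'a \<Rightarrow> bool"
  assumes "sigma_finite_measure M"
    and ae: "AE (s, \<omega>) in restrict_space lborel {x::real. 0 \<le> x \<and> ereal x \<le> T} \<Otimes>\<^sub>M M.
      P (ereal s) \<omega>"
    and "0 \<le> c" "c < d" "d \<le> T"
  shows "\<exists>s\<in>{0..T}. c < s \<and> s < d \<and> (AE \<omega> in M. P s \<omega>)"
proof -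
  define D where "D = {x::real. 0 \<le> x \<and> ereal x \<le> T}"
  have D: "D \<in> sets lborel"
    unfolding D_def by measurable
  have "pair_sigma_finite (restrict_space lborel D) M"
    using assms(1) sigma_finite_measure_restrict_space[OF _ D] lborel.sigma_finite_measure_axioms
    unfolding pair_sigma_finite_def by auto
  then have "AE s in restrict_space lborel D. AE \<omega> in M. P (ereal s) \<omega>"
    using pair_sigma_finite.AE_pair ae[folded D_def] by fastforce
  then obtain N where N: "N \<in> null_sets lborel"
    "\<And>s. s \<in> D \<Longrightarrow> \<not> (AE \<omega> in M. P (ereal s) \<omega>) \<Longrightarrow> s \<in> N"
    by (elim AE_E3) (auto simp: null_sets_restrict_space[OF D] space_restrict_space)
  obtain a where a: "c = ereal a"
    using \<open>0 \<le> c\<close> \<open>c < d\<close> by (cases c) auto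
  obtain b where b: "a < b" "ereal b \<le> d"
  proof (cases d)
    case (real d')
    then show thesis using that \<open>c < d\<close> a by auto
  qed (use that[of "a + 1"] \<open>c < d\<close> in auto)
  have "\<exists>s\<in>{a<..<b}. AE \<omega> in M. P (ereal s) \<omega>"
  proof (rule ccontr)
    assume "\<not> ?thesis"
    moreover have "ereal b \<le> T"
      using b(2) \<open>d \<le> T\<close> by order
    then have "{a<..<b} \<subseteq> D"
      using a \<open>0 \<le> c\<close> unfolding D_def by (auto intro: order_trans[rotated])
    ultimately have "{a<..<b} \<subseteq> N"
      using N(2) by blast
    then have "emeasure lborel {a<..<b} \<le> emeasure lborel N"
      using N(1) by (intro emeasure_mono) auto
    then show False
      using N(1) b by (simp add: null_setsD1)
  qed
  then obtain s where "a < s" "s < b" "AE \<omega> in M. P (ereal s) \<omega>"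
    by auto
  moreover have "ereal s < ereal b"
    using \<open>s < b\<close> by simp
  then have "ereal s < d"
    using b(2) by (rule less_le_trans)
  moreover have "c < ereal s"
    using a \<open>a < s\<close> by simp
  moreover from calculation have "ereal s \<in> {0..T}"
    using \<open>0 \<le> c\<close> \<open>d \<le> T\<close> unfolding atLeastAtMost_iff by (intro conjI; order)
  ultimately show ?thesis
    by blast
qed

lemma integrable_mult_bounded:
  fixes X f :: "'a \<Rightarrow> real"
  assumes X: "integrable M X" and f: "f \<in> borel_measurable M"
    and bound: "\<And>\<omega>. \<omega> \<in> space M \<Longrightarrow> \<bar>f \<omega>\<bar> \<le> 1"
  shows "integrable M (\<lambda>\<omega>. X \<omega> * f \<omega>)"
proof (rule Bochner_Integration.integrable_bound[OF X])
  show "(\<lambda>\<omega>. X \<omega> * f \<omega>) \<in> borel_measurable M"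
    using X f by measurable
  show "AE \<omega> in M. norm (X \<omega> * f \<omega>) \<le> norm (X \<omega>)"
    using bound by (intro AE_I2) (auto simp: abs_mult intro!: mult_left_le)
qed

lemma integral_mult_tendsto_bounded:
  fixes X g :: "'a \<Rightarrow> real" and f :: "nat \<Rightarrow> 'a \<Rightarrow> real"
  assumes X: "integrable M X"
    and f: "\<And>n. f n \<in> borel_measurable M" and g: "g \<in> borel_measurable M"
    and lim: "AE \<omega> in M. (\<lambda>n. f n \<omega>) \<longlonglongrightarrow> g \<omega>"
    and bound: "\<And>n \<omega>. \<omega> \<in> space M \<Longrightarrow> \<bar>f n \<omega>\<bar> \<le> 1"
  shows "(\<lambda>n. \<integral>\<omega>. X \<omega> * f n \<omega> \<partial>M) \<longlonglongrightarrow> (\<integral>\<omega>. X \<omega> * g \<omega> \<partial>M)"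
proof (rule integral_dominated_convergence[where w="\<lambda>\<omega>. \<bar>X \<omega>\<bar>"])
  show "(\<lambda>\<omega>. X \<omega> * f n \<omega>) \<in> borel_measurable M" for n
    using X f by measurable
  show "(\<lambda>\<omega>. X \<omega> * g \<omega>) \<in> borel_measurable M"
    using X g by measurable
  show "integrable M (\<lambda>\<omega>. \<bar>X \<omega>\<bar>)"
    using X by simp
  show "AE \<omega> in M. (\<lambda>n. X \<omega> * f n \<omega>) \<longlonglongrightarrow> X \<omega> * g \<omega>"
    using lim by eventually_elim (rule tendsto_mult_left)
  show "AE \<omega> in M. norm (X \<omega> * f n \<omega>) \<le> \<bar>X \<omega>\<bar>" for n
    using bound by (intro AE_I2) (auto simp: abs_mult intro!: mult_left_le)
qed

lemma A0_measurable:
  assumes "A0 M T G r" and "\<forall>s\<in>{0..T}. subalgebra M (F s)" and "\<forall>s\<in>{0..T}. subalgebra (F s) (G s)"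
    and "s \<in> {0..T}"
  shows "r s \<in> borel_measurable M"
proof -
  have "r s \<in> borel_measurable (G s)"
    using assms(1,4) unfolding A0_def by blast
  then have "r s \<in> borel_measurable (F s)"
    using assms(3,4) by (blast intro: measurable_from_subalg)
  then show ?thesis
    using assms(2,4) by (blast intro: measurable_from_subalg)
qed

lemma A0_bounded:
  assumes A0: "A0 M T G r" and "\<omega> \<in> space M" and s: "s \<in> {0..T}"
  shows "\<bar>r s \<omega>\<bar> \<le> 1"
proof -
  have mono: "mono_on {0..T} (\<lambda>s. r s \<omega>)" and "0 \<le> r 0 \<omega>" "r T \<omega> = 1"
    using A0 \<open>\<omega> \<in> space M\<close> unfolding A0_def by blast+
  moreover have "r 0 \<omega> \<le> r s \<omega>"
    using s by (intro mono_onD[OF mono]) auto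
  moreover have "r s \<omega> \<le> r T \<omega>"
    using s by (intro mono_onD[OF mono]) auto
  ultimately show ?thesis by simp
qed

lemma A0_mono:
  assumes "A0 M T G r" "\<omega> \<in> space M"
  shows "mono_on {0..T} (\<lambda>s. r s \<omega>)"
  using assms unfolding A0_def by blast

lemma A0_tendsto_at_right:
  assumes "A0 M T G r" "\<omega> \<in> space M" "t \<in> {0..<T}"
  shows "((\<lambda>s. r s \<omega>) \<longlongrightarrow> r t \<omega>) (at_right t)"
  using assms unfolding A0_def by blast

context
  fixes M :: "'a measure" and T :: ereal and G :: "ereal \<Rightarrow> 'a measure"
    and r :: "ereal \<Rightarrow> 'a \<Rightarrow> real" and X :: "'a \<Rightarrow> real"
  assumes A0: "A0 M T G r"
    and meas: "\<And>s. s \<in> {0..T} \<Longrightarrow> r s \<in> borel_measurable M"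
    and X: "integrable M X"
begin

lemma integrable_mult_A0:
  assumes "s \<in> {0..T}"
  shows "integrable M (\<lambda>\<omega>. X \<omega> * r s \<omega>)"
  using assms by (intro integrable_mult_bounded[OF X] meas A0_bounded[OF A0])

lemma mono_on_integral_A0:
  assumes X_nonneg: "\<And>\<omega>. \<omega> \<in> space M \<Longrightarrow> 0 \<le> X \<omega>"
  shows "mono_on {0..T} (\<lambda>s. \<integral>\<omega>. X \<omega> * r s \<omega> \<partial>M)"
proof (rule mono_onI)
  fix s u assume su: "s \<in> {0..T}" "u \<in> {0..T}" "s \<le> u"
  have "X \<omega> * r s \<omega> \<le> X \<omega> * r u \<omega>" if "\<omega> \<in> space M" for \<omega>
    using su X_nonneg[OF that] by (intro mult_left_mono mono_onD[OF A0_mono[OF A0 that]]) auto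
  then show "(\<integral>\<omega>. X \<omega> * r s \<omega> \<partial>M) \<le> (\<integral>\<omega>. X \<omega> * r u \<omega> \<partial>M)"
    using su by (intro integral_mono integrable_mult_A0)
qed

lemma integral_A0_tendsto_at_right:
  assumes "0 \<le> t" "t < T"
  shows "((\<lambda>s. \<integral>\<omega>. X \<omega> * r s \<omega> \<partial>M) \<longlongrightarrow> (\<integral>\<omega>. X \<omega> * r t \<omega> \<partial>M)) (at_right t)"
proof (rule tendsto_at_right_sequentially[OF \<open>t < T\<close>])
  fix S :: "nat \<Rightarrow> ereal"
  assume S: "\<And>n. t < S n" "\<And>n. S n < T" "decseq S" "S \<longlonglongrightarrow> t"
  then have lim: "filterlim S (at_right t) sequentially"
    by (auto simp: filterlim_at intro!: always_eventually)
  have S_range: "S n \<in> {0..T}" for n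
    using S(1,2)[of n] \<open>0 \<le> t\<close> unfolding atLeastAtMost_iff by (intro conjI; order)
  show "(\<lambda>n. \<integral>\<omega>. X \<omega> * r (S n) \<omega> \<partial>M) \<longlonglongrightarrow> (\<integral>\<omega>. X \<omega> * r t \<omega> \<partial>M)"
  proof (rule integral_mult_tendsto_bounded[OF X])
    show "AE \<omega> in M. (\<lambda>n. r (S n) \<omega>) \<longlonglongrightarrow> r t \<omega>"
      using assms by (intro AE_I2 filterlim_compose[OF A0_tendsto_at_right[OF A0] lim]) auto
  qed (use assms S_range in \<open>auto intro: meas A0_bounded[OF A0]\<close>)
qed

lemma borel_measurable_left_lim_A0:
  assumes "0 < t" "t \<le> T"
  shows "(\<lambda>\<omega>. left_lim (\<lambda>s. r s \<omega>) t) \<in> borel_measurable M"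
proof -
  obtain p where p: "\<And>k. 0 < p k" "\<And>k. p k < t" "filterlim p (at_left t) sequentially"
  proof (rule dense_seq_at_left[OF \<open>0 < t\<close>, of UNIV])
    show "\<exists>s\<in>UNIV. c < s \<and> s < t" if "c < t" for c
      using dense[OF that] by blast
  qed blast
  have p_range: "p k \<in> {0..T}" for k
    using p(1,2)[of k] \<open>t \<le> T\<close> unfolding atLeastAtMost_iff by (intro conjI; order)
  have "(\<lambda>k. r (p k) \<omega>) \<longlonglongrightarrow> left_lim (\<lambda>s. r s \<omega>) t" if "\<omega> \<in> space M" for \<omega>
    using filterlim_compose[OF mono_on_left_lim(1)[OF A0_mono[OF A0 that] assms] p(3)] .
  then show ?thesis
    by (rule borel_measurable_LIMSEQ_real[OF _ meas[OF p_range]])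
qed

lemma integral_jump_A0:
  assumes "t \<in> {0..T}"
  shows "(\<integral>\<omega>. X \<omega> * jump (\<lambda>s. r s \<omega>) t \<partial>M) = jump (\<lambda>s. \<integral>\<omega>. X \<omega> * r s \<omega> \<partial>M) t"
proof (cases "t = 0")
  case False
  then have t: "0 < t" "t \<le> T"
    using assms by auto
  define l where "l \<omega> = left_lim (\<lambda>s. r s \<omega>) t" for \<omega>
  have l_meas: "l \<in> borel_measurable M"
    unfolding l_def[abs_def] using borel_measurable_left_lim_A0[OF t] .
  have l_bound: "\<bar>l \<omega>\<bar> \<le> 1" if "\<omega> \<in> space M" for \<omega>
  proof -
    have "r 0 \<omega> \<le> l \<omega>" "l \<omega> \<le> r t \<omega>"
      unfolding l_def using mono_on_left_lim(2,3)[OF A0_mono[OF A0 that] t] t(1) by auto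
    moreover have "\<bar>r 0 \<omega>\<bar> \<le> 1" "\<bar>r t \<omega>\<bar> \<le> 1"
      using A0_bounded[OF A0 that] assms by auto
    ultimately show ?thesis by linarith
  qed
  have "((\<lambda>s. \<integral>\<omega>. X \<omega> * r s \<omega> \<partial>M) \<longlongrightarrow> (\<integral>\<omega>. X \<omega> * l \<omega> \<partial>M)) (at_left t)"
  proof (rule tendsto_at_left_sequentially[OF t(1)])
    fix S :: "nat \<Rightarrow> ereal"
    assume S: "\<And>n. S n < t" "\<And>n. 0 < S n" "incseq S" "S \<longlonglongrightarrow> t"
    then have lim: "filterlim S (at_left t) sequentially"
      by (auto simp: filterlim_at intro!: always_eventually)
    have S_range: "S n \<in> {0..T}" for n
      using S(1,2)[of n] t(2) unfolding atLeastAtMost_iff by (intro conjI; order)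
    show "(\<lambda>n. \<integral>\<omega>. X \<omega> * r (S n) \<omega> \<partial>M) \<longlonglongrightarrow> (\<integral>\<omega>. X \<omega> * l \<omega> \<partial>M)"
    proof (rule integral_mult_tendsto_bounded[OF X _ l_meas])
      show "AE \<omega> in M. (\<lambda>n. r (S n) \<omega>) \<longlonglongrightarrow> l \<omega>"
        unfolding l_def
        by (intro AE_I2 filterlim_compose[OF mono_on_left_lim(1)[OF A0_mono[OF A0] t] lim])
    qed (use S_range in \<open>auto intro: meas A0_bounded[OF A0]\<close>)
  qed
  then have "left_lim (\<lambda>s. \<integral>\<omega>. X \<omega> * r s \<omega> \<partial>M) t = (\<integral>\<omega>. X \<omega> * l \<omega> \<partial>M)"
    by (rule left_lim_eqI[OF t(1)])
  moreover have "(\<integral>\<omega>. X \<omega> * jump (\<lambda>s. r s \<omega>) t \<partial>M) = (\<integral>\<omega>. X \<omega> * r t \<omega> - X \<omega> * l \<omega> \<partial>M)"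
    unfolding jump_def l_def by (simp add: right_diff_distrib)
  moreover have "\<dots> = (\<integral>\<omega>. X \<omega> * r t \<omega> \<partial>M) - (\<integral>\<omega>. X \<omega> * l \<omega> \<partial>M)"
    using assms l_bound
    by (intro Bochner_Integration.integral_diff integrable_mult_A0 integrable_mult_bounded[OF X l_meas])
  ultimately show ?thesis
    unfolding jump_def by simp
qed simp

end

theorem mainTheorem12:
  fixes M :: "'a measure" and T :: ereal
    and F G :: "ereal \<Rightarrow> 'a measure"
    and \<rho>n :: "nat \<Rightarrow> ereal \<Rightarrow> 'a \<Rightarrow> real" and \<rho> :: "ereal \<Rightarrow> 'a \<Rightarrow> real"
    and t :: ereal and X :: "'a \<Rightarrow> real"
  assumes "prob_space M" and "complete_measure M"
    and "0 < T"
    and "\<forall>s\<in>{0..T}. subalgebra M (F s)"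
    and "\<forall>s\<in>{0..T}. \<forall>u\<in>{0..T}. s \<le> u \<longrightarrow> sets (F s) \<subseteq> sets (F u)"
    and "\<forall>s\<in>{0..T}. subalgebra (F s) (G s)"
    and "\<forall>s\<in>{0..T}. \<forall>u\<in>{0..T}. s \<le> u \<longrightarrow> sets (G s) \<subseteq> sets (G u)"
    and "\<forall>n. A0 M T G (\<rho>n n)"
    and "A0 M T G \<rho>"
    and "AE (s, \<omega>) in (restrict_space lborel {x::real. 0 \<le> x \<and> ereal x \<le> T} \<Otimes>\<^sub>M M).
           (\<lambda>n. \<rho>n n (ereal s) \<omega>) \<longlonglongrightarrow> \<rho> (ereal s) \<omega>"
    and "t \<in> {0..T}"
    and "X \<in> borel_measurable M" and "\<forall>\<omega>\<in>space M. 0 \<le> X \<omega>" and "integrable M X"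
  shows "limsup (\<lambda>n. ereal (\<integral>\<omega>. X \<omega> * jump (\<lambda>s. \<rho>n n s \<omega>) t \<partial>M))
           \<le> ereal (\<integral>\<omega>. X \<omega> * jump (\<lambda>s. \<rho> s \<omega>) t \<partial>M)"
proof -
  interpret prob_space M by fact
  note A0n = spec[OF assms(8)] and A0 = assms(9) and X = \<open>integrable M X\<close>
  have meas_n: "\<And>n s. s \<in> {0..T} \<Longrightarrow> \<rho>n n s \<in> borel_measurable M"
    and meas: "\<And>s. s \<in> {0..T} \<Longrightarrow> \<rho> s \<in> borel_measurable M"
    using A0_measurable[OF A0n assms(4,6)] A0_measurable[OF A0 assms(4,6)] by blast+
  define S where "S = {s \<in> {0..T}. AE \<omega> in M. (\<lambda>n. \<rho>n n s \<omega>) \<longlonglongrightarrow> \<rho> s \<omega>}"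
  have "T \<in> S"
    using A0n A0 \<open>0 < T\<close> unfolding S_def A0_def by (auto intro!: AE_I2)
  have dense: "\<exists>s\<in>S. c < s \<and> s < d" if "0 \<le> c" "c < d" "d \<le> T" for c d
    using AE_sections_dense[OF sigma_finite_measure_axioms assms(10) that] unfolding S_def by blast
  have conv: "(\<lambda>n. \<integral>\<omega>. X \<omega> * \<rho>n n s \<omega> \<partial>M) \<longlonglongrightarrow> (\<integral>\<omega>. X \<omega> * \<rho> s \<omega> \<partial>M)" if "s \<in> S" for s
  proof (rule integral_mult_tendsto_bounded[OF X])
    show "AE \<omega> in M. (\<lambda>n. \<rho>n n s \<omega>) \<longlonglongrightarrow> \<rho> s \<omega>"
      using that unfolding S_def by blast
  qed (use that in \<open>auto simp: S_def intro: meas_n meas A0_bounded[OF A0n]\<close>)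
  have "limsup (\<lambda>n. ereal (jump (\<lambda>s. \<integral>\<omega>. X \<omega> * \<rho>n n s \<omega> \<partial>M) t))
      \<le> ereal (jump (\<lambda>s. \<integral>\<omega>. X \<omega> * \<rho> s \<omega> \<partial>M) t)"
    using assms(11,13) X meas_n meas \<open>T \<in> S\<close>
    by (intro limsup_jump_le[OF mono_on_integral_A0[OF A0n] mono_on_integral_A0[OF A0]
          integral_A0_tendsto_at_right[OF A0] conv _ _ dense]) (auto simp: S_def)
  then show ?thesis
    using integral_jump_A0[OF A0n meas_n X] integral_jump_A0[OF A0 meas X] assms(11) by simp
qed

end
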